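(* The set $\ell^\infty\setminus S$ is strongly $\mathfrak{c}$-algebrable in the algebra $\ell^\infty$ (with pointwise operations).
   Context: $\ell^\infty$ is the algebra of bounded real sequences with coordinatewise operations. $S=\{x\in\ell^\infty\colon\lim_n\frac{x_1+\dots+x_n}{n}\text{ exists}\}$. A subset $A$ of a commutative algebra $\mathcal L$ is strongly $\kappa$-algebrable if $A\cup\{0\}$ contains a $\kappa$-generated subalgebra (minimal number of generators of cardinality $\kappa$) which is isomorphic to a free algebra; equivalently, there is a set $Z\subset\mathcal L$ of cardinality $\kappa$ such that for every $n$, every non-zero polynomial $P$ in $n$ variables without constant term and all distinct $z_1,\dots,z_n\in Z$, $P(z_1,\dots,z_n)\in A\setminus\{0\}$. $\mathfrak c$ is the cardinality of the continuum. *)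

theory Defs
  imports "HOL-Analysis.Analysis" "HOL-Library.Equipollence"
begin

text \<open>ell-infinity: bounded real sequences (index 0 plays the role of x_1).\<close>
definition linf :: "(nat \<Rightarrow> real) set" where
  "linf = {x. Bseq x}"

definition cesaro_S :: "(nat \<Rightarrow> real) set" where
  "cesaro_S = {x \<in> linf. convergent (\<lambda>n. (\<Sum>i<Suc n. x i) / real (Suc n))}"

text \<open>A real polynomial in variables 0..n-1 without constant term, given by its
  coefficient function on multi-indices (exponent vectors) alpha.\<close>
definition poly_nc :: "nat \<Rightarrow> ((nat \<Rightarrow> nat) \<Rightarrow> real) \<Rightarrow> bool" where
  "poly_nc n c \<longleftrightarrow> finite {\<alpha>. c \<alpha> \<noteq> 0}
     \<and> (\<forall>\<alpha>. c \<alpha> \<noteq> 0 \<longrightarrow> (\<forall>i\<ge>n. \<alpha> i = 0))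
     \<and> c (\<lambda>_. 0) = 0"

definition poly_eval :: "nat \<Rightarrow> ((nat \<Rightarrow> nat) \<Rightarrow> real) \<Rightarrow> (nat \<Rightarrow> nat \<Rightarrow> real) \<Rightarrow> nat \<Rightarrow> real" where
  "poly_eval n c z = (\<lambda>k. \<Sum>\<alpha>\<in>{\<alpha>. c \<alpha> \<noteq> 0}. c \<alpha> * (\<Prod>i<n. z i k ^ \<alpha> i))"

text \<open>Strong kappa-algebrability of A in the algebra linf, with kappa given as the
  cardinality of a type/set K.\<close>
definition strongly_algebrable_linf :: "(nat \<Rightarrow> real) set \<Rightarrow> 'k set \<Rightarrow> bool" where
  "strongly_algebrable_linf A K \<longleftrightarrow> (\<exists>Z. Z \<subseteq> linf \<and> Z \<approx> K \<and>
     (\<forall>n c z. poly_nc n c \<and> (\<exists>\<alpha>. c \<alpha> \<noteq> 0) \<and> inj_on z {..<n} \<and> z ` {..<n} \<subseteq> Z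
        \<longrightarrow> poly_eval n c z \<in> A \<and> poly_eval n c z \<noteq> (\<lambda>_. 0)))"

end

(* Each real r yields a sequence constant on the factorial blocks [j!, (j+1)!): it vanishes
   on odd blocks, and on block 2m it equals (1/2)^e, where the exponent e is read off from
   floor(r K) by the m-th entry of an enumeration in which every finite list of rules recurs
   infinitely often.  Block j is j times longer than everything before it, so the Cesaro
   mean at its end is within 2B/(j+1) of the value on it; hence a bounded block-constant
   sequence in S has convergent block values.  A polynomial P without constant term in
   distinct generators vanishes on odd blocks.  Since finitely many distinct reals are
   separated by floor(r K) for large K, any prescribed exponents e_i are realised on
   infinitely many even blocks, and by Kronecker substitution some choice makes
   P((1/2)^e_0, ..., (1/2)^e_(n-1)) nonzero.  So the block values of P do not converge. *)

theory Submission
  imports Defs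
begin

definition fact_block :: "nat \<Rightarrow> nat" where
  "fact_block k = (LEAST j. k < (fact (Suc j) :: nat))"

lemma fact_block_eq:
  assumes "(fact j :: nat) \<le> k" "k < fact (Suc j)"
  shows "fact_block k = j"
  unfolding fact_block_def
proof (rule Least_equality)
  show "k < fact (Suc j)" by fact
next
  fix i assume i: "k < (fact (Suc i) :: nat)"
  show "j \<le> i"
  proof (rule ccontr)
    assume "\<not> j \<le> i"
    then have "(fact (Suc i) :: nat) \<le> fact j" by (intro fact_mono) simp
    with assms(1) i show False by simp
  qed
qed

lemma fact_block_fact: "1 \<le> j \<Longrightarrow> fact_block (fact j) = j"
  by (rule fact_block_eq) simp_all

lemma cesaro_mean_at_block_end:
  fixes V :: "nat \<Rightarrow> real"
  assumes bnd: "\<And>j. \<bar>V j\<bar> \<le> B"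
  shows "\<bar>(\<Sum>i<fact (Suc j). V (fact_block i)) / real (fact (Suc j)) - V j\<bar> \<le> 2 * B / Suc j"
proof -
  let ?F = "fact j :: nat" and ?G = "fact (Suc j) :: nat"
  have FG: "?F \<le> ?G" by (rule fact_mono) simp
  have block: "(\<Sum>i\<in>{?F..<?G}. V (fact_block i)) = real (?G - ?F) * V j"
    using fact_block_eq[of j] by (simp add: sum.cong[of _ _ _ "\<lambda>_. V j"])
  have head: "\<bar>\<Sum>i<?F. V (fact_block i)\<bar> \<le> ?F * B"
    using order_trans[OF sum_abs sum_mono[of "{..<?F}" "\<lambda>i. \<bar>V (fact_block i)\<bar>" "\<lambda>_. B"]]
    by (simp add: bnd)
  have "(\<Sum>i<?G. V (fact_block i)) = (\<Sum>i<?F. V (fact_block i)) + real (?G - ?F) * V j"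
    by (metis FG block atLeast0LessThan sum.atLeastLessThan_concat zero_le)
  then have "(\<Sum>i<?G. V (fact_block i)) / ?G - V j = ((\<Sum>i<?F. V (fact_block i)) - ?F * V j) / ?G"
    using FG by (simp add: field_simps del: fact_Suc)
  also have "\<bar>\<dots>\<bar> \<le> (?F * B + ?F * B) / ?G"
  proof -
    have "\<bar>?F * V j\<bar> \<le> ?F * B" using bnd[of j] by (simp add: abs_mult mult_left_mono)
    with head have "\<bar>(\<Sum>i<?F. V (fact_block i)) - ?F * V j\<bar> \<le> ?F * B + ?F * B"
      by linarith
    then show ?thesis unfolding abs_divide abs_of_nat by (rule divide_right_mono) simp
  qed
  also have "\<dots> = 2 * B / Suc j"
  proof -
    have "(F * B + F * B) / (S * F) = 2 * B / S" if "F > 0" for F S :: real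
      using that by (simp add: field_simps)
    moreover have "real ?G = Suc j * real ?F" by (simp add: algebra_simps)
    ultimately show ?thesis by simp
  qed
  finally show ?thesis .
qed

lemma block_values_tendsto_cesaro_limit:
  fixes V :: "nat \<Rightarrow> real"
  assumes bnd: "\<And>j. \<bar>V j\<bar> \<le> B"
    and lim: "(\<lambda>n. (\<Sum>i<Suc n. V (fact_block i)) / real (Suc n)) \<longlonglongrightarrow> l"
  shows "V \<longlonglongrightarrow> l"
proof -
  let ?mean = "\<lambda>n. (\<Sum>i<Suc n. V (fact_block i)) / real (Suc n)"
  define s where "s j = fact (Suc j) - (1 :: nat)" for j
  have Suc_s: "Suc (s j) = fact (Suc j)" for j
    unfolding s_def using fact_ge_1[of "Suc j", where 'a = nat] by simp
  have "filterlim s at_top sequentially"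
  proof (rule filterlim_at_top_mono[OF filterlim_ident])
    show "\<forall>\<^sub>F j in sequentially. j \<le> s j"
      by (intro always_eventually allI) (metis Suc_le_mono Suc_s fact_ge_self)
  qed
  then have "(\<lambda>j. ?mean (s j)) \<longlonglongrightarrow> l"
    by (rule filterlim_compose[OF lim])
  moreover have "(\<lambda>j. ?mean (s j) - V j) \<longlonglongrightarrow> 0"
  proof (rule Lim_null_comparison)
    show "\<forall>\<^sub>F j in sequentially. norm (?mean (s j) - V j) \<le> 2 * B / Suc j"
      using cesaro_mean_at_block_end[of V B] bnd
      by (intro always_eventually allI) (simp add: Suc_s del: fact_Suc)
    show "(\<lambda>j. 2 * B / real (Suc j)) \<longlonglongrightarrow> 0"
      using LIMSEQ_Suc[OF lim_const_over_n[of "2 * B"]] by simp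
  qed
  ultimately show ?thesis
    using tendsto_diff by fastforce
qed

(* A rule (K, a, e) proposes the exponent e for every r with floor(r K) = a. *)
definition rule_value :: "real \<Rightarrow> (nat \<times> int \<times> nat) list \<Rightarrow> nat" where
  "rule_value r L = Max (insert 0 {e. \<exists>K a. (K, a, e) \<in> set L \<and> \<lfloor>r * real K\<rfloor> = a})"

definition rule_list :: "nat \<Rightarrow> (nat \<times> int \<times> nat) list" where
  "rule_list m = from_nat (fst (prod_decode m))"

lemma rule_list_recurs: "\<exists>m\<ge>M. rule_list m = L"
proof (intro exI conjI)
  show "M \<le> prod_encode (to_nat L, M)" by (rule le_prod_encode_2)
  show "rule_list (prod_encode (to_nat L, M)) = L"
    by (simp add: rule_list_def)
qed

lemma floor_scaling_inj_on:
  assumes "finite R"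
  obtains K :: nat where "inj_on (\<lambda>x. \<lfloor>x * real K\<rfloor>) R"
proof
  let ?G = "(\<lambda>(x, y). 1 / \<bar>x - y\<bar>) ` (R \<times> R)"
  define K where "K = Suc (nat \<lceil>Max (insert 0 ?G)\<rceil>)"
  have fin: "finite ?G" using assms by simp
  show "inj_on (\<lambda>x. \<lfloor>x * real K\<rfloor>) R"
  proof (rule inj_onI, rule ccontr)
    fix x y assume xy: "x \<in> R" "y \<in> R" "\<lfloor>x * real K\<rfloor> = \<lfloor>y * real K\<rfloor>" "x \<noteq> y"
    have "1 / \<bar>x - y\<bar> \<le> Max (insert 0 ?G)" using fin xy by (intro Max_ge) force+
    also have "\<dots> < K" unfolding K_def by linarith
    finally have "1 < \<bar>x - y\<bar> * real K"
      using xy(4) by (simp add: field_simps)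
    also have "\<dots> = \<bar>x * real K - y * real K\<bar>"
      by (simp add: abs_mult flip: left_diff_distrib)
    finally show False using xy(3) by linarith
  qed
qed

lemma rule_values_realize:
  fixes r :: "nat \<Rightarrow> real"
  assumes "inj_on r {..<n}"
  shows "\<exists>m\<ge>M. \<forall>i<n. rule_value (r i) (rule_list m) = e i"
proof -
  obtain K where K: "inj_on (\<lambda>x. \<lfloor>x * real K\<rfloor>) (r ` {..<n})"
    using floor_scaling_inj_on[OF finite_imageI[OF finite_lessThan]] by blast
  define L where "L = map (\<lambda>i. (K, \<lfloor>r i * real K\<rfloor>, e i)) [0..<n]"
  have "rule_value (r i) L = e i" if "i < n" for i
  proof -
    have "{e'. \<exists>K' a. (K', a, e') \<in> set L \<and> \<lfloor>r i * real K'\<rfloor> = a} = {e i}"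
    proof (intro equalityI subsetI)
      fix e' assume "e' \<in> {e'. \<exists>K' a. (K', a, e') \<in> set L \<and> \<lfloor>r i * real K'\<rfloor> = a}"
      then obtain i' where i': "i' < n" "\<lfloor>r i' * real K\<rfloor> = \<lfloor>r i * real K\<rfloor>" "e' = e i'"
        unfolding L_def by auto
      then have "r i' = r i" using that by (intro inj_onD[OF K]) auto
      then have "i' = i" using that i' by (intro inj_onD[OF assms]) auto
      with i' show "e' \<in> {e i}" by simp
    qed (use that in \<open>force simp: L_def\<close>)
    then show ?thesis unfolding rule_value_def by simp
  qed
  then show ?thesis using rule_list_recurs[of M L] by metis
qed

lemma base_expansion_inj:
  fixes D :: nat
  assumes "\<forall>i<n. \<alpha> i < D" "\<forall>i<n. \<beta> i < D"
    and "(\<Sum>i<n. \<alpha> i * D ^ i) = (\<Sum>i<n. \<beta> i * D ^ i)"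
  shows "\<forall>i<n. \<alpha> i = \<beta> i"
  using assms
proof (induction n arbitrary: \<alpha> \<beta>)
  case 0
  then show ?case by simp
next
  case (Suc n)
  have split: "(\<Sum>i<Suc n. \<gamma> i * D ^ i) = \<gamma> 0 + D * (\<Sum>i<n. \<gamma> (Suc i) * D ^ i)" for \<gamma>
    unfolding sum.lessThan_Suc_shift by (simp add: sum_distrib_left mult_ac)
  have digits: "\<alpha> 0 < D" "\<beta> 0 < D" using Suc.prems by auto
  have eq: "\<alpha> 0 + D * (\<Sum>i<n. \<alpha> (Suc i) * D ^ i) = \<beta> 0 + D * (\<Sum>i<n. \<beta> (Suc i) * D ^ i)"
    using Suc.prems(3) split[of \<alpha>] split[of \<beta>] by simp
  then have "(\<alpha> 0 + D * (\<Sum>i<n. \<alpha> (Suc i) * D ^ i)) mod D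
      = (\<beta> 0 + D * (\<Sum>i<n. \<beta> (Suc i) * D ^ i)) mod D"
    by simp
  then have head: "\<alpha> 0 = \<beta> 0" using digits by simp
  with eq digits have "(\<Sum>i<n. \<alpha> (Suc i) * D ^ i) = (\<Sum>i<n. \<beta> (Suc i) * D ^ i)"
    by simp
  with Suc.prems have "\<forall>i<n. \<alpha> (Suc i) = \<beta> (Suc i)"
    by (intro Suc.IH) auto
  with head show ?case by (auto simp: less_Suc_eq_0_disj)
qed

lemma poly_eval_nonzero_at_powers:
  fixes q :: real
  assumes fin: "finite {\<alpha>. c \<alpha> \<noteq> 0}"
    and vars: "\<forall>\<alpha>. c \<alpha> \<noteq> 0 \<longrightarrow> (\<forall>i\<ge>n. \<alpha> i = 0)"
    and "c \<alpha>0 \<noteq> 0" and q: "0 < q" "q \<noteq> 1"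
  obtains e where "poly_eval n c (\<lambda>i _. q ^ e i) k \<noteq> 0"
proof -
  define A where "A = {\<alpha>. c \<alpha> \<noteq> 0}"
  have "\<alpha>0 \<in> A" using \<open>c \<alpha>0 \<noteq> 0\<close> by (simp add: A_def)
  define D where "D = Suc (Max (insert 0 ((\<lambda>(\<alpha>, i). \<alpha> i) ` (A \<times> {..<n}))))"
  have digit: "\<alpha> i < D" if "\<alpha> \<in> A" "i < n" for \<alpha> i
    unfolding D_def using fin that by (simp add: A_def less_Suc_eq_le Max_ge_iff) force
  \<comment> \<open>Kronecker substitution: x_i becomes y^(D^i), so x^\<alpha> becomes y^(E \<alpha>).\<close>
  define E where "E \<alpha> = (\<Sum>i<n. \<alpha> i * D ^ i)" for \<alpha> :: "nat \<Rightarrow> nat"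
  have "inj_on E A"
  proof (rule inj_onI, rule ext)
    fix \<alpha> \<beta> i assume \<alpha>\<beta>: "\<alpha> \<in> A" "\<beta> \<in> A" "E \<alpha> = E \<beta>"
    show "\<alpha> i = \<beta> i"
    proof (cases "i < n")
      case True
      have "\<forall>i<n. \<alpha> i = \<beta> i"
        using \<alpha>\<beta> digit unfolding E_def by (intro base_expansion_inj) auto
      with True show ?thesis by simp
    next
      case False
      then have "n \<le> i" by simp
      with \<alpha>\<beta> vars have "\<alpha> i = 0" "\<beta> i = 0" by (auto simp: A_def)
      then show ?thesis by simp
    qed
  qed
  define Q where "Q = (\<Sum>\<alpha>\<in>A. monom (c \<alpha>) (E \<alpha>))"
  have "coeff Q (E \<alpha>0) = c \<alpha>0"
  proof -
    have "coeff Q (E \<alpha>0) = (\<Sum>\<alpha>\<in>A. if \<alpha> = \<alpha>0 then c \<alpha> else 0)"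
      unfolding Q_def coeff_sum coeff_monom
      using \<open>inj_on E A\<close> \<open>\<alpha>0 \<in> A\<close> by (intro sum.cong) (auto simp: inj_on_def)
    also have "\<dots> = c \<alpha>0" using fin \<open>\<alpha>0 \<in> A\<close> by (simp add: A_def)
    finally show ?thesis .
  qed
  then have "Q \<noteq> 0" using \<open>c \<alpha>0 \<noteq> 0\<close> by auto
  then have "finite {x. poly Q x = 0}" by (rule poly_roots_finite)
  moreover have "infinite (range (\<lambda>t::nat. q ^ t))"
    using q by (auto simp: finite_image_iff inj_on_def power_inject_exp')
  ultimately obtain t :: nat where t: "poly Q (q ^ t) \<noteq> 0"
    by (metis (mono_tags, lifting) finite_subset image_subset_iff mem_Collect_eq)
  have "poly Q (q ^ t) = poly_eval n c (\<lambda>i _. q ^ (t * D ^ i)) k"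
    unfolding Q_def poly_eval_def E_def A_def
    by (simp add: poly_sum poly_monom power_sum power_mult[symmetric] mult_ac)
  with t show thesis using that by metis
qed

lemma poly_eval_cong:
  assumes "\<And>i. i < n \<Longrightarrow> z i k = z' i k"
  shows "poly_eval n c z k = poly_eval n c z' k"
  unfolding poly_eval_def using assms by simp

lemma abs_poly_eval_le:
  assumes "\<And>i. i < n \<Longrightarrow> \<bar>z i k\<bar> \<le> 1"
  shows "\<bar>poly_eval n c z k\<bar> \<le> (\<Sum>\<alpha>\<in>{\<alpha>. c \<alpha> \<noteq> 0}. \<bar>c \<alpha>\<bar>)"
  unfolding poly_eval_def
proof (rule order_trans[OF sum_abs], rule sum_mono)
  fix \<alpha>
  have "\<bar>\<Prod>i<n. z i k ^ \<alpha> i\<bar> \<le> 1"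
    unfolding abs_prod power_abs using assms by (intro prod_le_1) (auto simp: power_le_one)
  then show "\<bar>c \<alpha> * (\<Prod>i<n. z i k ^ \<alpha> i)\<bar> \<le> \<bar>c \<alpha>\<bar>"
    by (simp add: abs_mult mult_left_le)
qed

lemma poly_eval_eq_0_at_origin:
  assumes "poly_nc n c" "\<And>i. i < n \<Longrightarrow> z i k = 0"
  shows "poly_eval n c z k = 0"
  unfolding poly_eval_def
proof (rule sum.neutral, rule ballI)
  fix \<alpha> assume "\<alpha> \<in> {\<alpha>. c \<alpha> \<noteq> 0}"
  with assms(1) have "\<alpha> \<noteq> (\<lambda>_. 0)" and vars: "\<forall>i\<ge>n. \<alpha> i = 0"
    unfolding poly_nc_def by auto
  then obtain i where i: "\<alpha> i \<noteq> 0" by auto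
  with vars have "i < n" by (meson not_le)
  with i assms(2) have "(\<Prod>i<n. z i k ^ \<alpha> i) = 0"
    by (subst prod_zero_iff) auto
  then show "c \<alpha> * (\<Prod>i<n. z i k ^ \<alpha> i) = 0" by simp
qed

definition block_value :: "real \<Rightarrow> nat \<Rightarrow> real" where
  "block_value r j = (if even j then (1/2) ^ rule_value r (rule_list (j div 2)) else 0)"

definition generator :: "real \<Rightarrow> nat \<Rightarrow> real" where
  "generator r k = block_value r (fact_block k)"

lemma abs_block_value_le_1: "\<bar>block_value r j\<bar> \<le> 1"
  unfolding block_value_def by (simp add: power_le_one)

lemma generator_in_linf: "generator r \<in> linf"
  unfolding linf_def generator_def using abs_block_value_le_1
  by (auto intro!: BseqI'[of _ 1])

lemma inj_generator: "inj generator"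
proof (rule injI, rule ccontr)
  fix r s assume eq: "generator r = generator s" and "r \<noteq> s"
  then have "inj_on (\<lambda>i::nat. if i = 0 then r else s) {..<2}"
    by (auto simp: inj_on_def)
  from rule_values_realize[OF this, of 1 "\<lambda>i. i"] obtain m where
    "1 \<le> m" and m: "\<forall>i<2. rule_value (if i = 0 then r else s) (rule_list m) = i"
    by blast
  moreover have "rule_value r (rule_list m) = 0" "rule_value s (rule_list m) = 1"
    using m[rule_format, of 0] m[rule_format, of 1] by simp_all
  ultimately have "generator r (fact (2 * m)) \<noteq> generator s (fact (2 * m))"
    by (simp add: generator_def block_value_def fact_block_fact)
  with eq show False by simp
qed

lemma poly_eval_block_values_not_convergent:
  assumes "poly_nc n c" "c \<alpha>0 \<noteq> 0" "inj_on r {..<n}"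
  shows "\<not> convergent (poly_eval n c (\<lambda>i. block_value (r i)))"
proof
  define V where "V = poly_eval n c (\<lambda>i. block_value (r i))"
  assume "convergent V"
  then obtain l where l: "V \<longlonglongrightarrow> l" by (auto simp: convergent_def)
  have "(\<lambda>j. V (Suc (2 * j))) \<longlonglongrightarrow> l"
    using LIMSEQ_subseq_LIMSEQ[OF l, of "\<lambda>j. Suc (2 * j)"] by (simp add: strict_mono_def o_def)
  moreover have "V (Suc (2 * j)) = 0" for j
    unfolding V_def using assms(1) by (rule poly_eval_eq_0_at_origin) (simp add: block_value_def)
  ultimately have "l = 0" by (simp add: LIMSEQ_const_iff)
  from assms(1) have fin: "finite {\<alpha>. c \<alpha> \<noteq> 0}"
    and vars: "\<forall>\<alpha>. c \<alpha> \<noteq> 0 \<longrightarrow> (\<forall>i\<ge>n. \<alpha> i = 0)"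
    by (simp_all add: poly_nc_def)
  obtain e where e: "poly_eval n c (\<lambda>i _. (1/2) ^ e i) 0 \<noteq> 0"
    by (rule poly_eval_nonzero_at_powers[of c n \<alpha>0 "1/2" 0, OF fin vars assms(2)]) simp_all
  define C where "C = poly_eval n c (\<lambda>i _. (1/2) ^ e i) 0"
  obtain M where M: "\<And>j. j \<ge> M \<Longrightarrow> \<bar>V j\<bar> < \<bar>C\<bar>"
    using LIMSEQ_D[OF l, of "\<bar>C\<bar>"] e \<open>l = 0\<close> by (auto simp: C_def)
  obtain m where "m \<ge> M" and m: "\<forall>i<n. rule_value (r i) (rule_list m) = e i"
    using rule_values_realize[OF assms(3)] by blast
  have "V (2 * m) = poly_eval n c (\<lambda>i _. (1/2) ^ e i) (2 * m)"
    unfolding V_def using m by (intro poly_eval_cong) (simp add: block_value_def)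
  also have "\<dots> = C" by (simp add: C_def poly_eval_def)
  finally show False using M[of "2 * m"] \<open>m \<ge> M\<close> by simp
qed

lemma poly_eval_generators_not_cesaro:
  assumes "poly_nc n c" "c \<alpha>0 \<noteq> 0" "inj_on r {..<n}"
  shows "poly_eval n c (\<lambda>i. generator (r i)) \<in> linf - cesaro_S"
proof -
  define V where "V = poly_eval n c (\<lambda>i. block_value (r i))"
  have eval: "poly_eval n c (\<lambda>i. generator (r i)) = (\<lambda>k. V (fact_block k))"
    by (simp add: V_def poly_eval_def generator_def)
  define B where "B = (\<Sum>\<alpha>\<in>{\<alpha>. c \<alpha> \<noteq> 0}. \<bar>c \<alpha>\<bar>)"
  have bnd: "\<bar>V j\<bar> \<le> B" for j
    unfolding V_def B_def by (rule abs_poly_eval_le) (rule abs_block_value_le_1)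
  have "\<not> convergent (\<lambda>n. (\<Sum>i<Suc n. V (fact_block i)) / real (Suc n))"
  proof
    assume "convergent (\<lambda>n. (\<Sum>i<Suc n. V (fact_block i)) / real (Suc n))"
    then obtain l where "(\<lambda>n. (\<Sum>i<Suc n. V (fact_block i)) / real (Suc n)) \<longlonglongrightarrow> l"
      by (auto simp: convergent_def)
    then have "V \<longlonglongrightarrow> l" by (rule block_values_tendsto_cesaro_limit[of V B, OF bnd])
    moreover have "\<not> convergent V"
      unfolding V_def by (rule poly_eval_block_values_not_convergent[of n c \<alpha>0 r, OF assms])
    ultimately show False by (auto simp: convergent_def)
  qed
  moreover have "(\<lambda>k. V (fact_block k)) \<in> linf"
    unfolding linf_def using bnd by (auto intro!: BseqI'[of _ B])
  ultimately show ?thesis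
    unfolding eval cesaro_S_def by simp
qed

theorem theorem3p5:
  shows "strongly_algebrable_linf (linf - cesaro_S) (UNIV :: real set)"
  unfolding strongly_algebrable_linf_def
proof (intro exI conjI allI impI)
  show "range generator \<subseteq> linf" using generator_in_linf by blast
  show "range generator \<approx> (UNIV :: real set)"
    using inj_generator by (rule inj_on_image_eqpoll_self)
next
  fix n c z
  assume H: "poly_nc n c \<and> (\<exists>\<alpha>. c \<alpha> \<noteq> 0) \<and> inj_on z {..<n} \<and> z ` {..<n} \<subseteq> range generator"
  then obtain \<alpha>0 where "poly_nc n c" "c \<alpha>0 \<noteq> 0" by blast
  from H have "\<forall>i\<in>{..<n}. \<exists>s. z i = generator s" by blast
  then obtain r where z: "\<forall>i\<in>{..<n}. z i = generator (r i)"
    by (auto dest!: bchoice)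
  with H have "inj_on r {..<n}" by (auto simp: inj_on_def)
  have "poly_eval n c z = poly_eval n c (\<lambda>i. generator (r i))"
    using z by (intro ext poly_eval_cong) simp
  with poly_eval_generators_not_cesaro[of n c \<alpha>0 r] \<open>poly_nc n c\<close> \<open>c \<alpha>0 \<noteq> 0\<close> \<open>inj_on r {..<n}\<close>
  show "poly_eval n c z \<in> linf - cesaro_S" by simp
  then show "poly_eval n c z \<noteq> (\<lambda>_. 0)"
    by (auto simp: cesaro_S_def linf_def convergent_const)
qed

end
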